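(* Let $G$ be a finite group and let $n$ be a positive integer. If $\mathrm{VPA}_n(G)\ne\emptyset$ then every prime divisor of $n$ divides $|G|$.
   Context: For a positive integer $k$, $\zeta_k$ denotes a complex primitive $k$-th root of unity; $\mathrm{Tr}_{F/K}$ is the trace map. $\sum_{x^G}$ denotes a sum over representatives of the conjugacy classes of $G$. Brauer characters modulo a prime $p$ are taken w.r.t. a sufficiently large $p$-modular system. $\mathrm{VPA}_n(G)$ is the set of lists $\varepsilon=(\varepsilon_d)_{d\mid n}$ of integer-valued class functions of $G$, indexed by the positive divisors of $n$, such that: (V1) $\sum_{x^G}\varepsilon_d(x)=1$ for each $d$; (V2) $\varepsilon_d(1)=0$ if $d\ne n$; (V3) $\varepsilon_d(x)=0$ if $|x|$ does not divide $n/d$; (V4) for every ordinary character $\chi$ of $G$ or Brauer character $\chi$ of $G$ modulo a prime not dividing $n$, and every $l\in\mathbb{Z}$, $\frac{1}{n}\sum_{x^G}\sum_{d\mid n}\varepsilon_d(x)\mathrm{Tr}_{\mathbb{Q}(\zeta_n^d)/\mathbb{Q}}(\chi(x)\zeta_n^{-ld})$ is a non-negative integer. *)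

theory Defs
  imports "HOL-Algebra.Algebra" "Jordan_Normal_Form.Matrix" "HOL-Computational_Algebra.Polynomial"
begin

definition conj_class :: "('a, 'b) monoid_scheme \<Rightarrow> 'a \<Rightarrow> 'a set" where
  "conj_class G x = {g \<otimes>\<^bsub>G\<^esub> x \<otimes>\<^bsub>G\<^esub> inv\<^bsub>G\<^esub> g | g. g \<in> carrier G}"

definition conj_classes :: "('a, 'b) monoid_scheme \<Rightarrow> 'a set set" where
  "conj_classes G = conj_class G ` carrier G"

definition sum_classes :: "('a, 'b) monoid_scheme \<Rightarrow> ('a \<Rightarrow> 'c::comm_monoid_add) \<Rightarrow> 'c" where
  "sum_classes G f = (\<Sum>C\<in>conj_classes G. f (SOME x. x \<in> C))"

definition class_function :: "('a, 'b) monoid_scheme \<Rightarrow> ('a \<Rightarrow> 'c) \<Rightarrow> bool" where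
  "class_function G f \<longleftrightarrow>
     (\<forall>x\<in>carrier G. \<forall>g\<in>carrier G. f (g \<otimes>\<^bsub>G\<^esub> x \<otimes>\<^bsub>G\<^esub> inv\<^bsub>G\<^esub> g) = f x)"

definition mat_trace :: "complex mat \<Rightarrow> complex" where
  "mat_trace A = (\<Sum>i<dim_row A. A $$ (i, i))"

definition ordinary_character :: "('a, 'b) monoid_scheme \<Rightarrow> ('a \<Rightarrow> complex) \<Rightarrow> bool" where
  "ordinary_character G \<chi> \<longleftrightarrow>
     (\<exists>(m::nat) (\<rho>::'a \<Rightarrow> complex mat).
        (\<forall>x\<in>carrier G. \<rho> x \<in> carrier_mat m m) \<and>
        \<rho> \<one>\<^bsub>G\<^esub> = 1\<^sub>m m \<and>
        (\<forall>x\<in>carrier G. \<forall>y\<in>carrier G. \<rho> (x \<otimes>\<^bsub>G\<^esub> y) = \<rho> x * \<rho> y) \<and>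
        (\<forall>x\<in>carrier G. \<chi> x = mat_trace (\<rho> x)))"

definition fmat_carrier :: "('k, 'c) ring_scheme \<Rightarrow> nat \<Rightarrow> (nat \<Rightarrow> nat \<Rightarrow> 'k) set" where
  "fmat_carrier F m = {A. \<forall>i j. (i < m \<and> j < m \<longrightarrow> A i j \<in> carrier F) \<and>
                                  (\<not> (i < m \<and> j < m) \<longrightarrow> A i j = \<zero>\<^bsub>F\<^esub>)}"

definition fmat_mult :: "('k, 'c) ring_scheme \<Rightarrow> nat \<Rightarrow> (nat \<Rightarrow> nat \<Rightarrow> 'k) \<Rightarrow> (nat \<Rightarrow> nat \<Rightarrow> 'k) \<Rightarrow> (nat \<Rightarrow> nat \<Rightarrow> 'k)" where
  "fmat_mult F m A B = (\<lambda>i j. if i < m \<and> j < m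
       then (\<Oplus>\<^bsub>F\<^esub> k\<in>{..<m}. A i k \<otimes>\<^bsub>F\<^esub> B k j) else \<zero>\<^bsub>F\<^esub>)"

definition fmat_diag :: "('k, 'c) ring_scheme \<Rightarrow> nat \<Rightarrow> (nat \<Rightarrow> 'k) \<Rightarrow> (nat \<Rightarrow> nat \<Rightarrow> 'k)" where
  "fmat_diag F m d = (\<lambda>i j. if i < m \<and> j < m \<and> i = j then d i else \<zero>\<^bsub>F\<^esub>)"

definition fmat_one :: "('k, 'c) ring_scheme \<Rightarrow> nat \<Rightarrow> (nat \<Rightarrow> nat \<Rightarrow> 'k)" where
  "fmat_one F m = fmat_diag F m (\<lambda>_. \<one>\<^bsub>F\<^esub>)"

definition pprime_roots :: "nat \<Rightarrow> ('k, 'c) ring_scheme \<Rightarrow> 'k set" where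
  "pprime_roots p F = {u \<in> carrier F. \<exists>k::nat. k > 0 \<and> coprime k p \<and> u [^]\<^bsub>F\<^esub> k = \<one>\<^bsub>F\<^esub>}"

text \<open>The data of a (sufficiently large) \<open>p\<close>-modular system relevant for Brauer characters:
  an algebraically closed residue field \<open>F\<close> of characteristic \<open>p\<close> together with the
  lifting \<open>\<lambda>\<close> of \<open>p'\<close>-roots of unity of \<open>F\<close> to complex roots of unity (an injective
  multiplicative map).\<close>
definition modular_system :: "nat \<Rightarrow> ('k, 'c) ring_scheme \<Rightarrow> ('k \<Rightarrow> complex) \<Rightarrow> bool" where
  "modular_system p F lft \<longleftrightarrow>
     Factorial_Ring.prime p \<and> algebraically_closed F \<and> add_pow F p \<one>\<^bsub>F\<^esub> = \<zero>\<^bsub>F\<^esub> \<and>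
     inj_on lft (pprime_roots p F) \<and>
     (\<forall>u\<in>pprime_roots p F. \<forall>v\<in>pprime_roots p F. lft (u \<otimes>\<^bsub>F\<^esub> v) = lft u * lft v)"

text \<open>Brauer characters of \<open>G\<close> modulo \<open>p\<close> w.r.t. the modular system \<open>(F, \<lambda>)\<close>:
  for a representation \<open>\<rho>\<close> of \<open>G\<close> over \<open>F\<close> and a \<open>p\<close>-regular element \<open>x\<close>, \<open>\<rho> x\<close> is
  diagonalisable; the value at \<open>x\<close> is the sum of the lifts of its eigenvalues
  (with multiplicity).  Values at \<open>p\<close>-singular elements are not constrained.\<close>
definition brauer_character ::
  "('a, 'b) monoid_scheme \<Rightarrow> nat \<Rightarrow> ('k, 'c) ring_scheme \<Rightarrow> ('k \<Rightarrow> complex) \<Rightarrow> ('a \<Rightarrow> complex) \<Rightarrow> bool" where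
  "brauer_character G p F lft \<chi> \<longleftrightarrow>
     (\<exists>(m::nat) (\<rho>::'a \<Rightarrow> nat \<Rightarrow> nat \<Rightarrow> 'k).
        (\<forall>x\<in>carrier G. \<rho> x \<in> fmat_carrier F m) \<and>
        \<rho> \<one>\<^bsub>G\<^esub> = fmat_one F m \<and>
        (\<forall>x\<in>carrier G. \<forall>y\<in>carrier G. \<rho> (x \<otimes>\<^bsub>G\<^esub> y) = fmat_mult F m (\<rho> x) (\<rho> y)) \<and>
        (\<forall>x\<in>carrier G. coprime (group.ord G x) p \<longrightarrow>
           (\<exists>P Q d. P \<in> fmat_carrier F m \<and> Q \<in> fmat_carrier F m \<and>
              fmat_mult F m P Q = fmat_one F m \<and>
              (\<forall>i<m. d i \<in> carrier F) \<and>
              fmat_mult F m (fmat_mult F m P (\<rho> x)) Q = fmat_diag F m d \<and>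
              \<chi> x = (\<Sum>i<m. lft (d i)))))"

definition zeta :: "nat \<Rightarrow> complex" where
  "zeta k = exp (2 * pi * \<i> / of_nat k)"

text \<open>For a primitive \<open>m\<close>-th root of unity \<open>z\<close>, the trace \<open>Tr_{\<Q>(z)/\<Q>}\<close> of
  \<open>\<alpha> = f(z) \<in> \<Q>(z)\<close> (\<open>f\<close> a rational polynomial) is \<open>\<Sum>\<^sub>\<sigma> \<sigma>(\<alpha>) = \<Sum>_{k coprime to m} f(z^k)\<close>,
  the Galois group of \<open>\<Q>(z)/\<Q>\<close> consisting of the maps \<open>z \<mapsto> z^k\<close>.\<close>
definition cyc_trace :: "nat \<Rightarrow> complex \<Rightarrow> complex \<Rightarrow> complex" where
  "cyc_trace m z \<alpha> =
     (let f = (SOME f :: rat poly. poly (map_poly of_rat f) z = \<alpha>)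
      in \<Sum>k\<in>{k. k < m \<and> coprime k m}. poly (map_poly of_rat f) (z ^ k))"

text \<open>\<open>\<epsilon> d\<close> is the class function \<open>\<epsilon>_d\<close>, for positive divisors \<open>d\<close> of \<open>n\<close>;
  \<open>F p\<close>, \<open>\<lambda> p\<close> the fixed \<open>p\<close>-modular system for each prime \<open>p\<close>.\<close>
definition VPA ::
  "nat \<Rightarrow> ('a, 'b) monoid_scheme \<Rightarrow> (nat \<Rightarrow> ('k, 'c) ring_scheme) \<Rightarrow> (nat \<Rightarrow> 'k \<Rightarrow> complex)
     \<Rightarrow> (nat \<Rightarrow> 'a \<Rightarrow> int) set" where
  "VPA n G F lft = {\<epsilon>.
     (\<forall>d. d dvd n \<longrightarrow> class_function G (\<epsilon> d)) \<and>
     (\<forall>d. d dvd n \<longrightarrow> sum_classes G (\<epsilon> d) = 1) \<and>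
     (\<forall>d. d dvd n \<longrightarrow> d \<noteq> n \<longrightarrow> \<epsilon> d \<one>\<^bsub>G\<^esub> = 0) \<and>
     (\<forall>d. d dvd n \<longrightarrow> (\<forall>x\<in>carrier G. \<not> group.ord G x dvd (n div d) \<longrightarrow> \<epsilon> d x = 0)) \<and>
     (\<forall>\<chi>. (ordinary_character G \<chi> \<or>
           (\<exists>p. Factorial_Ring.prime p \<and> \<not> p dvd n \<and> brauer_character G p (F p) (lft p) \<chi>)) \<longrightarrow>
        (\<forall>l::int. \<exists>k::nat.
           (1 / of_nat n) * sum_classes G (\<lambda>x. \<Sum>d | d dvd n.
               of_int (\<epsilon> d x) * cyc_trace (n div d) (zeta n ^ d)
                                    (\<chi> x * zeta n powi (- (l * int d))))
           = of_nat k))}"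

end

theory Submission
  imports Defs
begin

text \<open>Evaluating (V4) at \<open>l = 0\<close> for the regular character and for the zero character and
  subtracting, every class except that of \<open>1\<close> cancels.  By (V2) and (V3) only \<open>\<epsilon>\<^sub>n\<close>
  survives at \<open>1\<close>, and (V1) forces \<open>\<epsilon>\<^sub>n(1) = 1\<close>; the trace over \<open>\<rat>(\<zeta>\<^sub>n\<^sup>n) = \<rat>\<close> is the
  identity, so the difference is \<open>|G| / n\<close>, which is thus an integer.  Hence \<open>n\<close> divides
  \<open>|G|\<close>, and in particular so does every prime divisor of \<open>n\<close>.\<close>

definition vpa_term ::
  "nat \<Rightarrow> (nat \<Rightarrow> 'a \<Rightarrow> int) \<Rightarrow> ('a \<Rightarrow> complex) \<Rightarrow> int \<Rightarrow> 'a \<Rightarrow> complex" where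
  "vpa_term n \<epsilon> \<chi> l x = (\<Sum>d | d dvd n.
     of_int (\<epsilon> d x) * cyc_trace (n div d) (zeta n ^ d) (\<chi> x * zeta n powi (- (l * int d))))"

lemma sum_classes_diff:
  "sum_classes G (\<lambda>x. (a x :: 'c::ab_group_add) - b x) = sum_classes G a - sum_classes G b"
  unfolding sum_classes_def by (simp add: sum_subtractf)

lemma sum_classes_supported_at_one:
  fixes G :: "('a, 'b) monoid_scheme" (structure) and h :: "'a \<Rightarrow> 'c::comm_monoid_add"
  assumes "group G" and "finite (carrier G)"
    and h0: "\<And>x. x \<in> carrier G \<Longrightarrow> x \<noteq> \<one> \<Longrightarrow> h x = 0"
  shows "sum_classes G h = h \<one>"
proof -
  interpret group G by fact
  have class_one: "conj_class G \<one> = {\<one>}"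
    unfolding conj_class_def by force
  then have one_in: "{\<one>} \<in> conj_classes G"
    unfolding conj_classes_def by (metis image_eqI one_closed)
  have finite_classes: "finite (conj_classes G)"
    unfolding conj_classes_def using assms(2) by simp
  have "h (SOME x. x \<in> C) = 0" if C: "C \<in> conj_classes G - {{\<one>}}" for C
  proof -
    from C obtain y where y: "y \<in> carrier G" "C = conj_class G y"
      unfolding conj_classes_def by auto
    have "y \<in> C" unfolding y conj_class_def
      by (rule CollectI, rule exI[of _ \<one>]) (use y in simp)
    then have "(SOME x. x \<in> C) \<in> C" by (rule someI)
    then obtain g where g: "g \<in> carrier G" "(SOME x. x \<in> C) = g \<otimes> y \<otimes> inv g"
      unfolding y conj_class_def by auto
    have "(SOME x. x \<in> C) \<noteq> \<one>"
    proof
      assume "(SOME x. x \<in> C) = \<one>"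
      then have "y = \<one>" using g y
        by (metis inv_closed inv_equality l_cancel_one' m_assoc m_closed r_inv)
      then show False using C y class_one by simp
    qed
    then show ?thesis using h0 g y by simp
  qed
  then have "sum_classes G h = h (SOME x. x \<in> {\<one>})"
    unfolding sum_classes_def
    using sum.remove[OF finite_classes one_in, of "\<lambda>C. h (SOME x. x \<in> C)"] by simp
  then show ?thesis by simp
qed

lemma ordinary_character_zero: "ordinary_character G (\<lambda>x. 0)"
  unfolding ordinary_character_def
  by (rule exI[of _ 0], rule exI[of _ "\<lambda>x. 1\<^sub>m 0"]) (auto simp: mat_trace_def)

lemma ordinary_character_regular:
  fixes G :: "('a, 'b) monoid_scheme" (structure)
  assumes "group G" and "finite (carrier G)"
  shows "ordinary_character G (\<lambda>x. if x = \<one> then of_nat (card (carrier G)) else 0)"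
proof -
  interpret group G by fact
  define m where "m = card (carrier G)"
  obtain f where f: "bij_betw f {0..<m} (carrier G)"
    using ex_bij_betw_nat_finite[OF assms(2)] unfolding m_def by blast
  have f_closed: "\<And>i. i < m \<Longrightarrow> f i \<in> carrier G"
    using f bij_betwE by fastforce
  have f_inj: "\<And>i j. i < m \<Longrightarrow> j < m \<Longrightarrow> f i = f j \<longleftrightarrow> i = j"
    using f unfolding bij_betw_def inj_on_def by auto
  have f_surj: "\<And>y. y \<in> carrier G \<Longrightarrow> \<exists>k<m. f k = y"
    using f unfolding bij_betw_def by (metis atLeastLessThan_iff imageE)
  define \<rho> :: "'a \<Rightarrow> complex mat" where
    "\<rho> x = mat m m (\<lambda>(i, j). if f i = x \<otimes> f j then 1 else 0)" for x
  have \<rho>_one: "\<rho> \<one> = 1\<^sub>m m"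
    by (rule eq_matI) (auto simp: \<rho>_def f_closed f_inj)
  have \<rho>_mult: "\<rho> (x \<otimes> y) = \<rho> x * \<rho> y" if x: "x \<in> carrier G" and y: "y \<in> carrier G" for x y
  proof (rule eq_matI)
    fix i j assume "i < dim_row (\<rho> x * \<rho> y)" "j < dim_col (\<rho> x * \<rho> y)"
    then have i: "i < m" and j: "j < m" by (auto simp: \<rho>_def)
    obtain k0 where k0: "k0 < m" "f k0 = y \<otimes> f j"
      using f_surj[of "y \<otimes> f j"] y f_closed[OF j] by auto
    have only_k0: "\<And>k. k < m \<Longrightarrow> f k = y \<otimes> f j \<longleftrightarrow> k = k0"
      using f_inj k0 by metis
    have "(\<rho> x * \<rho> y) $$ (i, j) = (\<Sum>k\<in>{0..<m}.
        (if f i = x \<otimes> f k then 1 else 0) * (if f k = y \<otimes> f j then 1 else (0::complex)))"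
      using i j by (simp add: \<rho>_def scalar_prod_def)
    also have "\<dots> = (\<Sum>k\<in>{0..<m}. if k = k0 then (if f i = x \<otimes> f k0 then 1 else 0) else 0)"
      by (rule sum.cong) (use only_k0 in auto)
    also have "\<dots> = \<rho> (x \<otimes> y) $$ (i, j)"
      using i j k0 x y f_closed by (simp add: \<rho>_def m_assoc)
    finally show "\<rho> (x \<otimes> y) $$ (i, j) = (\<rho> x * \<rho> y) $$ (i, j)" by simp
  qed (auto simp: \<rho>_def)
  have \<rho>_trace: "(if x = \<one> then of_nat m else 0) = mat_trace (\<rho> x)" if x: "x \<in> carrier G" for x
  proof (cases "x = \<one>")
    case True
    then show ?thesis using f_closed by (simp add: mat_trace_def \<rho>_def)
  next
    case False
    have "mat_trace (\<rho> x) = (\<Sum>i<m. 0)" unfolding mat_trace_def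
      by (rule sum.cong) (use x False f_closed in \<open>auto simp: \<rho>_def\<close>)
    then show ?thesis using False by simp
  qed
  show ?thesis unfolding ordinary_character_def m_def[symmetric]
    by (rule exI[of _ m], rule exI[of _ \<rho>]) (use \<rho>_one \<rho>_mult \<rho>_trace in \<open>auto simp: \<rho>_def\<close>)
qed

lemma zeta_pow_self: "n > 0 \<Longrightarrow> zeta n ^ n = 1"
proof -
  assume n: "n > 0"
  have "zeta n ^ n = exp (of_nat n * (2 * pi * \<i> / of_nat n))"
    unfolding zeta_def by (rule exp_of_nat_mult[symmetric])
  also have "of_nat n * (2 * pi * \<i> / of_nat n) = 2 * of_real pi * \<i>" using n by simp
  finally show ?thesis by simp
qed

lemma cyc_trace_one_of_nat: "cyc_trace 1 1 (of_nat N) = of_nat N"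
proof -
  define f where "f = (SOME f :: rat poly. poly (map_poly of_rat f) (1::complex) = of_nat N)"
  have "\<exists>f :: rat poly. poly (map_poly of_rat f) (1::complex) = of_nat N"
    by (rule exI[of _ "[:of_nat N:]"]) (simp add: map_poly_pCons)
  then have "poly (map_poly of_rat f) (1::complex) = of_nat N"
    unfolding f_def by (rule someI_ex)
  moreover have "{k::nat. k < 1 \<and> coprime k 1} = {0}" by auto
  ultimately show ?thesis unfolding cyc_trace_def Let_def f_def[symmetric] by simp
qed

lemma VPA_ordinary_character_sum:
  assumes "\<epsilon> \<in> VPA n G F lft" and "n > 0" and "ordinary_character G \<chi>"
  obtains k :: nat where "sum_classes G (vpa_term n \<epsilon> \<chi> l) = of_nat n * of_nat k"
proof -
  obtain k :: nat where "(1 / of_nat n) * sum_classes G (vpa_term n \<epsilon> \<chi> l) = of_nat k"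
    using assms(1,3) unfolding VPA_def vpa_term_def by blast
  then have "sum_classes G (vpa_term n \<epsilon> \<chi> l) = of_nat n * of_nat k"
    using assms(2) by (simp add: field_simps)
  then show ?thesis by (rule that)
qed

lemma VPA_top_at_one:
  fixes G :: "('a, 'b) monoid_scheme" (structure)
  assumes "group G" and "finite (carrier G)" and "n > 0" and "\<epsilon> \<in> VPA n G F lft"
  shows "\<epsilon> n \<one> = 1"
proof -
  interpret group G by fact
  have "sum_classes G (\<epsilon> n) = \<epsilon> n \<one>"
  proof (rule sum_classes_supported_at_one[OF assms(1,2)])
    fix x assume x: "x \<in> carrier G" "x \<noteq> \<one>"
    then have "\<not> ord x dvd n div n" using ord_eq_1[OF x(1)] assms(3) by simp
    then show "\<epsilon> n x = 0" using assms(4) x(1) unfolding VPA_def by auto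
  qed
  then show ?thesis using assms(4) unfolding VPA_def by auto
qed

lemma vpa_term_at_one:
  fixes G :: "('a, 'b) monoid_scheme" (structure)
  assumes "group G" and "finite (carrier G)" and "n > 0" and "\<epsilon> \<in> VPA n G F lft"
    and "\<chi> \<one> = of_nat N"
  shows "vpa_term n \<epsilon> \<chi> 0 \<one> = of_nat N"
proof -
  have lower_vanish: "\<epsilon> d \<one> = 0" if "d dvd n" "d \<noteq> n" for d
    using assms(4) that unfolding VPA_def by auto
  have "vpa_term n \<epsilon> \<chi> 0 \<one>
      = (\<Sum>d \<in> {d. d dvd n}. of_int (\<epsilon> d \<one>) * cyc_trace (n div d) (zeta n ^ d) (of_nat N))"
    unfolding vpa_term_def using assms(5) by simp
  also have "\<dots> = of_int (\<epsilon> n \<one>) * cyc_trace (n div n) (zeta n ^ n) (of_nat N)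
      + (\<Sum>d \<in> {d. d dvd n} - {n}. of_int (\<epsilon> d \<one>) * cyc_trace (n div d) (zeta n ^ d) (of_nat N))"
    by (rule sum.remove) (use assms(3) in auto)
  also have "\<dots> = of_nat N"
    using VPA_top_at_one[OF assms(1-4)] lower_vanish assms(3)
    using cyc_trace_one_of_nat[of N] by (simp add: zeta_pow_self)
  finally show ?thesis .
qed

lemma VPA_member_imp_dvd_order:
  fixes G :: "('a, 'b) monoid_scheme" (structure)
  assumes "group G" and "finite (carrier G)" and "n > 0" and "\<epsilon> \<in> VPA n G F lft"
  shows "n dvd card (carrier G)"
proof -
  define m where "m = card (carrier G)"
  define \<chi>\<^sub>r :: "'a \<Rightarrow> complex" where "\<chi>\<^sub>r x = (if x = \<one> then of_nat m else 0)" for x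
  define \<chi>\<^sub>0 :: "'a \<Rightarrow> complex" where "\<chi>\<^sub>0 x = 0" for x
  obtain k\<^sub>r where k\<^sub>r: "sum_classes G (vpa_term n \<epsilon> \<chi>\<^sub>r 0) = of_nat n * of_nat k\<^sub>r"
    using VPA_ordinary_character_sum[OF assms(4,3) ordinary_character_regular[OF assms(1,2)]]
    unfolding \<chi>\<^sub>r_def m_def by blast
  obtain k\<^sub>0 where k\<^sub>0: "sum_classes G (vpa_term n \<epsilon> \<chi>\<^sub>0 0) = of_nat n * of_nat k\<^sub>0"
    using VPA_ordinary_character_sum[OF assms(4,3) ordinary_character_zero]
    unfolding \<chi>\<^sub>0_def by blast
  have "sum_classes G (\<lambda>x. vpa_term n \<epsilon> \<chi>\<^sub>r 0 x - vpa_term n \<epsilon> \<chi>\<^sub>0 0 x)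
      = vpa_term n \<epsilon> \<chi>\<^sub>r 0 \<one> - vpa_term n \<epsilon> \<chi>\<^sub>0 0 \<one>"
    by (rule sum_classes_supported_at_one[OF assms(1,2)]) (simp add: vpa_term_def \<chi>\<^sub>r_def \<chi>\<^sub>0_def)
  also have "\<dots> = of_nat m - of_nat 0"
    using vpa_term_at_one[OF assms] by (simp add: \<chi>\<^sub>r_def \<chi>\<^sub>0_def)
  finally have "(of_nat m :: complex) = of_nat n * of_nat k\<^sub>r - of_nat n * of_nat k\<^sub>0"
    using k\<^sub>r k\<^sub>0 by (simp add: sum_classes_diff)
  then have "(of_int (int m) :: complex) = of_int (int n * (int k\<^sub>r - int k\<^sub>0))"
    by (simp add: algebra_simps)
  then have "int m = int n * (int k\<^sub>r - int k\<^sub>0)"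
    using of_int_eq_iff by blast
  then show ?thesis unfolding m_def by (metis dvd_triv_left int_dvd_int_iff)
qed

theorem proposition3p3:
  fixes G :: "('a, 'b) monoid_scheme" and n :: nat
    and F :: "nat \<Rightarrow> ('k, 'c) ring_scheme" and lft :: "nat \<Rightarrow> 'k \<Rightarrow> complex"
  assumes "group G" and "finite (carrier G)" and "n > 0"
    and "\<And>p. Factorial_Ring.prime p \<Longrightarrow> modular_system p (F p) (lft p)"
    and "VPA n G F lft \<noteq> {}"
  shows "\<forall>p::nat. Factorial_Ring.prime p \<and> p dvd n \<longrightarrow> p dvd card (carrier G)"
proof -
  obtain \<epsilon> where "\<epsilon> \<in> VPA n G F lft" using assms(5) by blast
  then have "n dvd card (carrier G)"
    using VPA_member_imp_dvd_order[OF assms(1-3)] by blast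
  then show ?thesis using dvd_trans by blast
qed

end
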